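(* Let $n\ge2$ and $\theta\in\mathcal{M}(\mathrm{Cr}_n)$. Then $\theta\in\mathcal{AM}(\mathrm{Cr}_n)$ if and only if for every pair of distinct, non-disjoint maximal chains $C,D$ of $\mathrm{Cr}_n$, the chains $\theta(C)$ and $\theta(D)$ have opposite parities.
   Context: $\mathrm{Cr}_n$ is the poset $\{x_1,\dots,x_n,y_1,\dots,y_n\}$ whose only relations between distinct elements are $x_i<y_i$ ($1\le i\le n$), $x_{i+1}<y_i$ ($1\le i\le n-1$) and $x_1<y_n$; its maximal chains are exactly these $2n$ two-element chains. The chains $x_i<y_i$ are called odd, and $x_{i+1}<y_i$ ($1\le i\le n-1$) and $x_1<y_n$ are called even. For a finite connected poset $X$ and $x<y$, $e_{xy}$ denotes the incidence-algebra basis element and $B=\{e_{xy}:x<y\}$. For a bijection $\theta:B\to B$ and a maximal chain $C:u_1<\dots<u_k$, $\theta$ is increasing on $C$ if there is a maximal chain $D:v_1<\dots<v_k$ with $\theta(e_{u_iu_j})=e_{v_iv_j}$ for all $i<j$, decreasing if $\theta(e_{u_iu_j})=e_{v_{k-j+1}v_{k-i+1}}$ for all $i<j$; in either case $\theta(C)=D$. $\mathcal{M}(X)$ is the set of bijections $B\to B$ increasing or decreasing on every maximal chain. A walk is a sequence $u_0,\dots,u_m$ where for each $i$ one of $u_i,u_{i+1}$ covers the other; closed if $u_0=u_m$. For a closed walk $\Gamma:u_0,\dots,u_m=u_0$ and $z\in X$: $s^+_{\theta,\Gamma}(z)=|\{i: u_i<u_{i+1},\ \exists w>z,\ \theta(e_{zw})=e_{u_iu_{i+1}}\}|$,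 $s^-_{\theta,\Gamma}(z)=|\{i: u_i>u_{i+1},\ \exists w>z,\ \theta(e_{zw})=e_{u_{i+1}u_i}\}|$, $t^+_{\theta,\Gamma}(z)=|\{i: u_i<u_{i+1},\ \exists w<z,\ \theta(e_{wz})=e_{u_iu_{i+1}}\}|$, $t^-_{\theta,\Gamma}(z)=|\{i: u_i>u_{i+1},\ \exists w<z,\ \theta(e_{wz})=e_{u_{i+1}u_i}\}|$, $0\le i\le m-1$. $\theta$ is admissible if $s^+-s^-=t^+-t^-$ at every $z$ for every closed walk; $\mathcal{AM}(X)$ is the set of admissible elements of $\mathcal{M}(X)$. *)

theory Defs
  imports Main
begin

text \<open>The incidence-algebra basis element e_xy is represented by the pair (x,y);
  B = {(x,y). x < y}.\<close>

definition basis :: "'a set \<Rightarrow> ('a \<Rightarrow> 'a \<Rightarrow> bool) \<Rightarrow> ('a \<times> 'a) set" where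
  "basis S lt = {(x, y). x \<in> S \<and> y \<in> S \<and> lt x y}"

text \<open>A maximal chain u_1 < ... < u_k is represented by the strictly increasing list
  of its elements.\<close>

definition is_chain_list :: "'a set \<Rightarrow> ('a \<Rightarrow> 'a \<Rightarrow> bool) \<Rightarrow> 'a list \<Rightarrow> bool" where
  "is_chain_list S lt us \<longleftrightarrow> set us \<subseteq> S \<and> sorted_wrt lt us"

definition max_chain :: "'a set \<Rightarrow> ('a \<Rightarrow> 'a \<Rightarrow> bool) \<Rightarrow> 'a list \<Rightarrow> bool" where
  "max_chain S lt us \<longleftrightarrow> us \<noteq> [] \<and> is_chain_list S lt us \<and>
     (\<forall>ws. is_chain_list S lt ws \<and> set us \<subseteq> set ws \<longrightarrow> set ws = set us)"

definition increasing_on ::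
  "'a set \<Rightarrow> ('a \<Rightarrow> 'a \<Rightarrow> bool) \<Rightarrow> ('a \<times> 'a \<Rightarrow> 'a \<times> 'a) \<Rightarrow> 'a list \<Rightarrow> 'a list \<Rightarrow> bool" where
  "increasing_on S lt \<theta> us vs \<longleftrightarrow> max_chain S lt vs \<and> length vs = length us \<and>
     (\<forall>i j. i < j \<and> j < length us \<longrightarrow> \<theta> (us ! i, us ! j) = (vs ! i, vs ! j))"

definition decreasing_on ::
  "'a set \<Rightarrow> ('a \<Rightarrow> 'a \<Rightarrow> bool) \<Rightarrow> ('a \<times> 'a \<Rightarrow> 'a \<times> 'a) \<Rightarrow> 'a list \<Rightarrow> 'a list \<Rightarrow> bool" where
  "decreasing_on S lt \<theta> us vs \<longleftrightarrow> max_chain S lt vs \<and> length vs = length us \<and>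
     (\<forall>i j. i < j \<and> j < length us \<longrightarrow>
        \<theta> (us ! i, us ! j) = (vs ! (length us - 1 - j), vs ! (length us - 1 - i)))"

definition chain_image ::
  "'a set \<Rightarrow> ('a \<Rightarrow> 'a \<Rightarrow> bool) \<Rightarrow> ('a \<times> 'a \<Rightarrow> 'a \<times> 'a) \<Rightarrow> 'a list \<Rightarrow> 'a list \<Rightarrow> bool" where
  "chain_image S lt \<theta> C D \<longleftrightarrow> increasing_on S lt \<theta> C D \<or> decreasing_on S lt \<theta> C D"

definition M_set :: "'a set \<Rightarrow> ('a \<Rightarrow> 'a \<Rightarrow> bool) \<Rightarrow> ('a \<times> 'a \<Rightarrow> 'a \<times> 'a) set" where
  "M_set S lt = {\<theta>. bij_betw \<theta> (basis S lt) (basis S lt) \<and>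
      (\<forall>C. max_chain S lt C \<longrightarrow> (\<exists>D. chain_image S lt \<theta> C D))}"

definition covers :: "'a set \<Rightarrow> ('a \<Rightarrow> 'a \<Rightarrow> bool) \<Rightarrow> 'a \<Rightarrow> 'a \<Rightarrow> bool" where
  "covers S lt x y \<longleftrightarrow> x \<in> S \<and> y \<in> S \<and> lt x y \<and> \<not> (\<exists>z\<in>S. lt x z \<and> lt z y)"

definition closed_walk :: "'a set \<Rightarrow> ('a \<Rightarrow> 'a \<Rightarrow> bool) \<Rightarrow> 'a list \<Rightarrow> bool" where
  "closed_walk S lt us \<longleftrightarrow> us \<noteq> [] \<and> set us \<subseteq> S \<and> hd us = last us \<and>
     (\<forall>i. Suc i < length us \<longrightarrow>
        covers S lt (us ! i) (us ! Suc i) \<or> covers S lt (us ! Suc i) (us ! i))"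

definition s_plus where
  "s_plus S lt \<theta> us z = card {i. Suc i < length us \<and> lt (us ! i) (us ! Suc i) \<and>
      (\<exists>w\<in>S. lt z w \<and> \<theta> (z, w) = (us ! i, us ! Suc i))}"

definition s_minus where
  "s_minus S lt \<theta> us z = card {i. Suc i < length us \<and> lt (us ! Suc i) (us ! i) \<and>
      (\<exists>w\<in>S. lt z w \<and> \<theta> (z, w) = (us ! Suc i, us ! i))}"

definition t_plus where
  "t_plus S lt \<theta> us z = card {i. Suc i < length us \<and> lt (us ! i) (us ! Suc i) \<and>
      (\<exists>w\<in>S. lt w z \<and> \<theta> (w, z) = (us ! i, us ! Suc i))}"

definition t_minus where
  "t_minus S lt \<theta> us z = card {i. Suc i < length us \<and> lt (us ! Suc i) (us ! i) \<and>
      (\<exists>w\<in>S. lt w z \<and> \<theta> (w, z) = (us ! Suc i, us ! i))}"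

definition admissible ::
  "'a set \<Rightarrow> ('a \<Rightarrow> 'a \<Rightarrow> bool) \<Rightarrow> ('a \<times> 'a \<Rightarrow> 'a \<times> 'a) \<Rightarrow> bool" where
  "admissible S lt \<theta> \<longleftrightarrow> (\<forall>us. closed_walk S lt us \<longrightarrow> (\<forall>z\<in>S.
      int (s_plus S lt \<theta> us z) - int (s_minus S lt \<theta> us z) =
      int (t_plus S lt \<theta> us z) - int (t_minus S lt \<theta> us z)))"

definition AM_set :: "'a set \<Rightarrow> ('a \<Rightarrow> 'a \<Rightarrow> bool) \<Rightarrow> ('a \<times> 'a \<Rightarrow> 'a \<times> 'a) set" where
  "AM_set S lt = {\<theta> \<in> M_set S lt. admissible S lt \<theta>}"

datatype cr = X nat | Y nat

definition cr_set :: "nat \<Rightarrow> cr set" where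
  "cr_set n = X ` {1..n} \<union> Y ` {1..n}"

definition cr_less :: "nat \<Rightarrow> cr \<Rightarrow> cr \<Rightarrow> bool" where
  "cr_less n a b \<longleftrightarrow> (\<exists>i j. a = X i \<and> b = Y j \<and> i \<in> {1..n} \<and> j \<in> {1..n} \<and>
      (i = j \<or> i = j + 1 \<or> (i = 1 \<and> j = n)))"

definition cr_odd :: "nat \<Rightarrow> cr list \<Rightarrow> bool" where
  "cr_odd n C \<longleftrightarrow> (\<exists>i\<in>{1..n}. C = [X i, Y i])"

definition cr_even :: "nat \<Rightarrow> cr list \<Rightarrow> bool" where
  "cr_even n C \<longleftrightarrow> (\<exists>i\<in>{1..n-1}. C = [X (i + 1), Y i]) \<or> C = [X 1, Y n]"

end

theory Submission
  imports Defs
begin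

(* The Hasse diagram of Cr_n is a single cycle X1 Y1 X2 Y2 ... Xn Yn X1 of length 2n.  Record
   for a closed walk the net flow along each edge (upward minus downward traversals).  Flow
   conservation at each vertex forces the net flow to be w on every odd edge and -w on every
   even edge, where w is the winding number of the walk.  For a bijection theta of the basis,
   s+ - s- at z is the total net flow along the images of the edges going up from z, and
   t+ - t- that along the images of the edges coming down to z; in the crown each vertex lies
   on exactly two edges, both on the same side of it.  Hence admissibility says that
   w (sign theta(e) + sign theta(e')) = 0 for every closed walk and every pair of edges e, e'
   meeting at a vertex.  The walk once around the crown has w = 1, so this holds iff
   theta(e) and theta(e') always have opposite parities. *)

definition step_count :: "'a list \<Rightarrow> 'a \<times> 'a \<Rightarrow> nat" where
  "step_count us p = card {i. Suc i < length us \<and> (us ! i, us ! Suc i) = p}"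

definition net_flow :: "'a list \<Rightarrow> 'a \<times> 'a \<Rightarrow> int" where
  "net_flow us p = int (step_count us p) - int (step_count us (prod.swap p))"

lemma net_flow_swap: "net_flow us (b, a) = - net_flow us (a, b)"
  unfolding net_flow_def by simp

lemma card_steps_in_eq_sum:
  assumes "finite P"
  shows "card {i. Suc i < length us \<and> (us ! i, us ! Suc i) \<in> P} = (\<Sum>p\<in>P. step_count us p)"
proof -
  have "{i. Suc i < length us \<and> (us ! i, us ! Suc i) \<in> P} =
      (\<Union>p\<in>P. {i. Suc i < length us \<and> (us ! i, us ! Suc i) = p})"
    by auto
  also have "card \<dots> = (\<Sum>p\<in>P. card {i. Suc i < length us \<and> (us ! i, us ! Suc i) = p})"
    using assms by (intro card_UN_disjoint) (auto intro: finite_subset[of _ "{..<length us}"])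
  finally show ?thesis
    unfolding step_count_def .
qed

lemma card_steps_diff_eq_net_flow_sum:
  assumes "finite P"
  shows "int (card {i. Suc i < length us \<and> (us ! i, us ! Suc i) \<in> P})
       - int (card {i. Suc i < length us \<and> (us ! Suc i, us ! i) \<in> P}) = (\<Sum>p\<in>P. net_flow us p)"
proof -
  have "{i. Suc i < length us \<and> (us ! Suc i, us ! i) \<in> P} =
      {i. Suc i < length us \<and> (us ! i, us ! Suc i) \<in> prod.swap ` P}"
    by force
  then have "card {i. Suc i < length us \<and> (us ! Suc i, us ! i) \<in> P} = (\<Sum>p\<in>P. step_count us (prod.swap p))"
    using assms card_steps_in_eq_sum[of "prod.swap ` P" us] by (simp add: sum.reindex)
  then show ?thesis
    using assms by (simp add: card_steps_in_eq_sum net_flow_def sum_subtractf)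
qed

lemma closed_list_card_out_eq_in:
  assumes "us \<noteq> []" and "hd us = last us"
  shows "card {i. Suc i < length us \<and> us ! i = v} = card {i. Suc i < length us \<and> us ! Suc i = v}"
proof -
  obtain m where len: "length us = Suc m"
    using assms(1) by (cases us) auto
  define f where "f i = (if us ! i = v then 1 else 0 :: nat)" for i
  have "f 0 = f m"
    using assms len unfolding f_def by (metis diff_Suc_1 hd_conv_nth last_conv_nth)
  then have "(\<Sum>i<m. f i) = (\<Sum>i<m. f (Suc i))"
    using sum.lessThan_Suc_shift[of f m] by simp
  moreover have "card {i. Suc i < length us \<and> P i} = (\<Sum>i<m. if P i then 1 else 0)" for P
    using len by (simp add: sum.If_cases Collect_conj_eq lessThan_def Int_commute)
  ultimately show ?thesis
    unfolding f_def by simp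
qed

lemma closed_list_net_flow_balance:
  assumes "us \<noteq> []" and "hd us = last us" and "finite N"
    and "\<And>i. Suc i < length us \<Longrightarrow> us ! i = v \<Longrightarrow> us ! Suc i \<in> N"
    and "\<And>i. Suc i < length us \<Longrightarrow> us ! Suc i = v \<Longrightarrow> us ! i \<in> N"
  shows "(\<Sum>w\<in>N. net_flow us (v, w)) = 0"
proof -
  have "{i. Suc i < length us \<and> (us ! i, us ! Suc i) \<in> Pair v ` N} = {i. Suc i < length us \<and> us ! i = v}"
    "{i. Suc i < length us \<and> (us ! Suc i, us ! i) \<in> Pair v ` N} = {i. Suc i < length us \<and> us ! Suc i = v}"
    using assms(4,5) by auto
  then have "(\<Sum>p\<in>Pair v ` N. net_flow us p) = 0"
    using card_steps_diff_eq_net_flow_sum[of "Pair v ` N" us] closed_list_card_out_eq_in[OF assms(1,2)]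
      assms(3) by simp
  then show ?thesis
    by (simp add: sum.reindex inj_on_def)
qed

lemma card_image_steps_diff_eq_net_flow_sum:
  assumes "finite S" and "bij_betw \<theta> (basis S lt) (basis S lt)" and "U \<subseteq> basis S lt"
  shows "int (card {i. Suc i < length us \<and> lt (us ! i) (us ! Suc i) \<and> (us ! i, us ! Suc i) \<in> \<theta> ` U})
       - int (card {i. Suc i < length us \<and> lt (us ! Suc i) (us ! i) \<and> (us ! Suc i, us ! i) \<in> \<theta> ` U})
       = (\<Sum>p\<in>U. net_flow us (\<theta> p))"
proof -
  have "\<theta> ` U \<subseteq> basis S lt"
    using assms(2,3) by (auto simp: bij_betw_def)
  then have "x \<in> \<theta> ` U \<Longrightarrow> lt (fst x) (snd x)" for x
    by (auto simp: basis_def)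
  then have "{i. Suc i < length us \<and> lt (us ! i) (us ! Suc i) \<and> (us ! i, us ! Suc i) \<in> \<theta> ` U} =
      {i. Suc i < length us \<and> (us ! i, us ! Suc i) \<in> \<theta> ` U}"
    "{i. Suc i < length us \<and> lt (us ! Suc i) (us ! i) \<and> (us ! Suc i, us ! i) \<in> \<theta> ` U} =
      {i. Suc i < length us \<and> (us ! Suc i, us ! i) \<in> \<theta> ` U}"
    by force+
  moreover have "finite U"
    using assms(1,3) unfolding basis_def by (auto intro: finite_subset[of _ "S \<times> S"])
  moreover have "inj_on \<theta> U"
    using assms(2,3) unfolding bij_betw_def by (auto intro: inj_on_subset)
  ultimately show ?thesis
    by (simp add: card_steps_diff_eq_net_flow_sum sum.reindex)
qed

lemma admissible_iff_net_flow_balance: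
  assumes "finite S" and "bij_betw \<theta> (basis S lt) (basis S lt)"
  shows "admissible S lt \<theta> \<longleftrightarrow> (\<forall>us. closed_walk S lt us \<longrightarrow> (\<forall>z\<in>S.
    (\<Sum>p | p \<in> basis S lt \<and> fst p = z. net_flow us (\<theta> p)) =
    (\<Sum>p | p \<in> basis S lt \<and> snd p = z. net_flow us (\<theta> p))))"
proof -
  have up: "(\<exists>w\<in>S. lt z w \<and> \<theta> (z, w) = x) \<longleftrightarrow> x \<in> \<theta> ` {p \<in> basis S lt. fst p = z}"
    and down: "(\<exists>w\<in>S. lt w z \<and> \<theta> (w, z) = x) \<longleftrightarrow> x \<in> \<theta> ` {p \<in> basis S lt. snd p = z}"
    if "z \<in> S" for z x
    using that by (force simp: basis_def)+
  have flow: "int (s_plus S lt \<theta> us z) - int (s_minus S lt \<theta> us z) =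
      (\<Sum>p | p \<in> basis S lt \<and> fst p = z. net_flow us (\<theta> p))"
    "int (t_plus S lt \<theta> us z) - int (t_minus S lt \<theta> us z) =
      (\<Sum>p | p \<in> basis S lt \<and> snd p = z. net_flow us (\<theta> p))"
    if "z \<in> S" for us z
    unfolding s_plus_def s_minus_def t_plus_def t_minus_def up[OF that] down[OF that]
    by (intro card_image_steps_diff_eq_net_flow_sum[OF assms]; blast)+
  show ?thesis
    unfolding admissible_def using flow by simp
qed

lemma chain_image_pair:
  assumes "chain_image S lt \<theta> [a, b] D"
  shows "D = [fst (\<theta> (a, b)), snd (\<theta> (a, b))]"
proof -
  have "length D = 2"
    using assms unfolding chain_image_def increasing_on_def decreasing_on_def by auto
  then obtain c d where D: "D = [c, d]"
    by (metis length_0_conv length_Suc_conv numeral_2_eq_2)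
  have "\<theta> (a, b) = (D ! 0, D ! 1)" if "increasing_on S lt \<theta> [a, b] D"
    using that[unfolded increasing_on_def, THEN conjunct2, THEN conjunct2, rule_format, of 0 1] by simp
  moreover have "\<theta> (a, b) = (D ! 0, D ! 1)" if "decreasing_on S lt \<theta> [a, b] D"
    using that[unfolded decreasing_on_def, THEN conjunct2, THEN conjunct2, rule_format, of 0 1] by simp
  ultimately have "\<theta> (a, b) = (c, d)"
    using assms D unfolding chain_image_def by auto
  then show ?thesis
    using D by simp
qed

lemma chain_image_pair_iff:
  assumes "\<theta> \<in> M_set S lt" and "max_chain S lt [a, b]"
  shows "chain_image S lt \<theta> [a, b] D \<longleftrightarrow> D = [fst (\<theta> (a, b)), snd (\<theta> (a, b))]"
proof -
  obtain D0 where "chain_image S lt \<theta> [a, b] D0"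
    using assms unfolding M_set_def by blast
  then show ?thesis
    using chain_image_pair by metis
qed

definition cr_pred :: "nat \<Rightarrow> nat \<Rightarrow> nat" where
  "cr_pred n i = (if i = 1 then n else i - 1)"

definition cr_succ :: "nat \<Rightarrow> nat \<Rightarrow> nat" where
  "cr_succ n i = (if i = n then 1 else i + 1)"

lemma cr_pred_neq: "n \<ge> 2 \<Longrightarrow> i \<in> {1..n} \<Longrightarrow> cr_pred n i \<noteq> i"
  and cr_succ_neq: "n \<ge> 2 \<Longrightarrow> i \<in> {1..n} \<Longrightarrow> cr_succ n i \<noteq> i"
  unfolding cr_pred_def cr_succ_def by auto

lemma cr_less_XY_iff:
  "cr_less n (X i) (Y j) \<longleftrightarrow> i \<in> {1..n} \<and> j \<in> {1..n} \<and> (i = j \<or> i = j + 1 \<or> (i = 1 \<and> j = n))"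
  unfolding cr_less_def by auto

lemma cr_less_cases:
  assumes "cr_less n a b"
  obtains i j where "a = X i" "b = Y j" "cr_less n (X i) (Y j)"
  using assms unfolding cr_less_def by auto

lemma not_cr_less_Y [simp]: "\<not> cr_less n (Y j) b"
  and not_cr_less_X [simp]: "\<not> cr_less n a (X i)"
  unfolding cr_less_def by auto

lemma cr_less_X_iff:
  "n \<ge> 2 \<Longrightarrow> i \<in> {1..n} \<Longrightarrow> cr_less n (X i) b \<longleftrightarrow> b = Y i \<or> b = Y (cr_pred n i)"
  unfolding cr_less_def cr_pred_def by auto

lemma cr_less_Y_iff:
  "n \<ge> 2 \<Longrightarrow> j \<in> {1..n} \<Longrightarrow> cr_less n a (Y j) \<longleftrightarrow> a = X j \<or> a = X (cr_succ n j)"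
  unfolding cr_less_def cr_succ_def by auto

lemma cr_less_in_cr_set: "cr_less n a b \<Longrightarrow> a \<in> cr_set n \<and> b \<in> cr_set n"
  unfolding cr_less_def cr_set_def by auto

lemma finite_cr_set: "finite (cr_set n)"
  unfolding cr_set_def by simp

lemma cr_basis_iff: "p \<in> basis (cr_set n) (cr_less n) \<longleftrightarrow> cr_less n (fst p) (snd p)"
  unfolding basis_def using cr_less_in_cr_set by (cases p) auto

lemma cr_basis_cases:
  assumes "p \<in> basis (cr_set n) (cr_less n)"
  obtains i j where "p = (X i, Y j)" and "cr_less n (X i) (Y j)"
proof -
  have "cr_less n (fst p) (snd p)"
    using assms by (simp add: cr_basis_iff)
  then obtain i j where "fst p = X i" "snd p = Y j" "cr_less n (X i) (Y j)"
    by (rule cr_less_cases)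
  then show thesis
    using that by (simp add: prod_eq_iff)
qed

lemma cr_covers_iff: "covers (cr_set n) (cr_less n) a b \<longleftrightarrow> cr_less n a b"
  unfolding covers_def using cr_less_in_cr_set by (fastforce elim: cr_less_cases)

lemma cr_edges_at_X:
  assumes "n \<ge> 2" and "k \<in> {1..n}"
  shows "{p \<in> basis (cr_set n) (cr_less n). fst p = X k} = {(X k, Y k), (X k, Y (cr_pred n k))}"
    and "{p \<in> basis (cr_set n) (cr_less n). snd p = X k} = {}"
proof -
  have "p \<in> basis (cr_set n) (cr_less n) \<and> fst p = X k \<longleftrightarrow> p = (X k, Y k) \<or> p = (X k, Y (cr_pred n k))" for p
    using cr_less_X_iff[OF assms, of "snd p"] by (cases p) (auto simp: cr_basis_iff)
  then show "{p \<in> basis (cr_set n) (cr_less n). fst p = X k} = {(X k, Y k), (X k, Y (cr_pred n k))}"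
    by blast
qed (auto simp: cr_basis_iff)

lemma cr_edges_at_Y:
  assumes "n \<ge> 2" and "k \<in> {1..n}"
  shows "{p \<in> basis (cr_set n) (cr_less n). snd p = Y k} = {(X k, Y k), (X (cr_succ n k), Y k)}"
    and "{p \<in> basis (cr_set n) (cr_less n). fst p = Y k} = {}"
proof -
  have "p \<in> basis (cr_set n) (cr_less n) \<and> snd p = Y k \<longleftrightarrow> p = (X k, Y k) \<or> p = (X (cr_succ n k), Y k)" for p
    using cr_less_Y_iff[OF assms, of "fst p"] by (cases p) (auto simp: cr_basis_iff)
  then show "{p \<in> basis (cr_set n) (cr_less n). snd p = Y k} = {(X k, Y k), (X (cr_succ n k), Y k)}"
    by blast
qed (auto simp: cr_basis_iff)

lemma cr_vertex_balance_iff: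
  assumes "n \<ge> 2"
  shows "(\<forall>z\<in>cr_set n. (\<Sum>p | p \<in> basis (cr_set n) (cr_less n) \<and> fst p = z. F p) =
            (\<Sum>p | p \<in> basis (cr_set n) (cr_less n) \<and> snd p = z. F p)) \<longleftrightarrow>
    (\<forall>k\<in>{1..n}. F (X k, Y k) + F (X k, Y (cr_pred n k)) = 0 \<and>
                F (X k, Y k) + F (X (cr_succ n k), Y k) = 0)"
proof -
  let ?balanced = "\<lambda>z. (\<Sum>p | p \<in> basis (cr_set n) (cr_less n) \<and> fst p = z. F p) =
                        (\<Sum>p | p \<in> basis (cr_set n) (cr_less n) \<and> snd p = z. F p)"
  have ball: "(\<forall>z\<in>cr_set n. P z) \<longleftrightarrow> (\<forall>k\<in>{1..n}. P (X k) \<and> P (Y k))" for P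
    unfolding cr_set_def by auto
  have XY: "?balanced (X k) \<longleftrightarrow> F (X k, Y k) + F (X k, Y (cr_pred n k)) = 0"
    "?balanced (Y k) \<longleftrightarrow> F (X k, Y k) + F (X (cr_succ n k), Y k) = 0"
    if "k \<in> {1..n}" for k
    using cr_pred_neq[OF assms that] cr_succ_neq[OF assms that]
    by (simp_all add: cr_edges_at_X[OF assms that] cr_edges_at_Y[OF assms that] eq_commute[of 0])
  show ?thesis
    unfolding ball using XY by simp
qed

lemma cr_closed_walk_step:
  assumes "closed_walk (cr_set n) (cr_less n) us" and "Suc i < length us"
  shows "cr_less n (us ! i) (us ! Suc i) \<or> cr_less n (us ! Suc i) (us ! i)"
  using assms unfolding closed_walk_def cr_covers_iff by blast

lemma cr_net_flow_balance:
  assumes n: "n \<ge> 2" and walk: "closed_walk (cr_set n) (cr_less n) us" and k: "k \<in> {1..n}"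
  shows "net_flow us (X k, Y k) + net_flow us (X k, Y (cr_pred n k)) = 0"
    and "net_flow us (X k, Y k) + net_flow us (X (cr_succ n k), Y k) = 0"
proof -
  have closed: "us \<noteq> []" "hd us = last us"
    using walk unfolding closed_walk_def by auto
  have "(\<Sum>w\<in>{Y k, Y (cr_pred n k)}. net_flow us (X k, w)) = 0"
  proof (rule closed_list_net_flow_balance[OF closed])
    fix i assume i: "Suc i < length us"
    show "us ! i = X k \<Longrightarrow> us ! Suc i \<in> {Y k, Y (cr_pred n k)}"
      and "us ! Suc i = X k \<Longrightarrow> us ! i \<in> {Y k, Y (cr_pred n k)}"
      using cr_closed_walk_step[OF walk i] cr_less_X_iff[OF n k] by auto
  qed simp
  then show "net_flow us (X k, Y k) + net_flow us (X k, Y (cr_pred n k)) = 0"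
    using cr_pred_neq[OF n k] by simp
  have "(\<Sum>w\<in>{X k, X (cr_succ n k)}. net_flow us (Y k, w)) = 0"
  proof (rule closed_list_net_flow_balance[OF closed])
    fix i assume i: "Suc i < length us"
    show "us ! i = Y k \<Longrightarrow> us ! Suc i \<in> {X k, X (cr_succ n k)}"
      and "us ! Suc i = Y k \<Longrightarrow> us ! i \<in> {X k, X (cr_succ n k)}"
      using cr_closed_walk_step[OF walk i] cr_less_Y_iff[OF n k] by auto
  qed simp
  then show "net_flow us (X k, Y k) + net_flow us (X (cr_succ n k), Y k) = 0"
    using cr_succ_neq[OF n k] by (simp add: net_flow_swap[of us "Y k"])
qed

definition odd_edge :: "cr \<times> cr \<Rightarrow> bool" where
  "odd_edge p \<longleftrightarrow> (\<exists>i. p = (X i, Y i))"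

lemma odd_edge_XY [simp]: "odd_edge (X i, Y j) \<longleftrightarrow> i = j"
  unfolding odd_edge_def by auto

lemma cr_net_flow_winding:
  assumes n: "n \<ge> 2" and walk: "closed_walk (cr_set n) (cr_less n) us"
    and edge: "p \<in> basis (cr_set n) (cr_less n)"
  shows "net_flow us p = (if odd_edge p then 1 else -1) * net_flow us (X 1, Y 1)"
proof -
  have odd_edges: "net_flow us (X (Suc m), Y (Suc m)) = net_flow us (X 1, Y 1)" if "Suc m \<le> n" for m
    using that
  proof (induction m)
    case (Suc m)
    then have m: "Suc m \<in> {1..n}" "Suc (Suc m) \<in> {1..n}"
      by auto
    moreover have "cr_succ n (Suc m) = Suc (Suc m)" "cr_pred n (Suc (Suc m)) = Suc m"
      using Suc.prems unfolding cr_succ_def cr_pred_def by auto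
    ultimately have "net_flow us (X (Suc m), Y (Suc m)) + net_flow us (X (Suc (Suc m)), Y (Suc m)) = 0"
      "net_flow us (X (Suc (Suc m)), Y (Suc (Suc m))) + net_flow us (X (Suc (Suc m)), Y (Suc m)) = 0"
      using cr_net_flow_balance[OF n walk m(1)] cr_net_flow_balance[OF n walk m(2)] by simp_all
    then show ?case
      using Suc by simp
  qed simp
  obtain i j where ab: "p = (X i, Y j)" and ij: "cr_less n (X i) (Y j)"
    using edge by (rule cr_basis_cases)
  have j: "j \<in> {1..n}"
    using ij by (simp add: cr_less_XY_iff)
  then have odd_j: "net_flow us (X j, Y j) = net_flow us (X 1, Y 1)"
    using odd_edges[of "j - 1"] by simp
  show ?thesis
  proof (cases "i = j")
    case True
    then show ?thesis
      using odd_j ab by simp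
  next
    case False
    then have "i = cr_succ n j"
      using ij cr_less_Y_iff[OF n j] by simp
    then show ?thesis
      using False odd_j ab cr_net_flow_balance(2)[OF n walk j] by simp
  qed
qed

(* The closed walk X 1, Y 1, X 2, Y 2, ..., X n, Y n, X 1 once around the crown. *)
definition cr_cycle :: "nat \<Rightarrow> cr list" where
  "cr_cycle n = map (\<lambda>p. if even p then X (p div 2 mod n + 1) else Y (p div 2 + 1)) [0..<2 * n + 1]"

lemma length_cr_cycle: "length (cr_cycle n) = 2 * n + 1"
  unfolding cr_cycle_def by simp

lemma cr_cycle_nth:
  "p \<le> 2 * n \<Longrightarrow> cr_cycle n ! p = (if even p then X (p div 2 mod n + 1) else Y (p div 2 + 1))"
  unfolding cr_cycle_def by (simp del: upt_Suc add: nth_map_upt)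

lemma cr_cycle_closed_walk:
  assumes n: "n \<ge> 2"
  shows "closed_walk (cr_set n) (cr_less n) (cr_cycle n)"
proof -
  have step: "cr_less n (cr_cycle n ! p) (cr_cycle n ! Suc p) \<or> cr_less n (cr_cycle n ! Suc p) (cr_cycle n ! p)"
    if p: "Suc p < length (cr_cycle n)" for p
  proof (cases "even p")
    case True
    then have "cr_cycle n ! p = X (p div 2 + 1)" "cr_cycle n ! Suc p = Y (p div 2 + 1)" "p div 2 + 1 \<le> n"
      using p by (auto simp: cr_cycle_nth length_cr_cycle)
    then show ?thesis
      by (simp add: cr_less_XY_iff)
  next
    case False
    define j where "j = p div 2 + 1"
    have j: "j \<in> {1..n}"
      using p False unfolding j_def length_cr_cycle by auto
    have "cr_succ n j = j mod n + 1"
      using j unfolding cr_succ_def by auto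
    then have "cr_cycle n ! p = Y j" "cr_cycle n ! Suc p = X (cr_succ n j)"
      using p False unfolding j_def by (auto simp: cr_cycle_nth length_cr_cycle)
    then show ?thesis
      using cr_less_Y_iff[OF n j] by simp
  qed
  have "cr_cycle n ! p \<in> cr_set n" if "p < length (cr_cycle n)" for p
  proof -
    have "p div 2 mod n + 1 \<in> {1..n}"
      using n by (simp add: Suc_leI)
    moreover have "odd p \<Longrightarrow> p div 2 + 1 \<in> {1..n}"
      using that by (auto simp: length_cr_cycle elim: oddE)
    ultimately show ?thesis
      using that unfolding cr_set_def by (auto simp: cr_cycle_nth length_cr_cycle)
  qed
  then have "set (cr_cycle n) \<subseteq> cr_set n"
    by (auto simp: in_set_conv_nth)
  moreover have "cr_cycle n \<noteq> []"
    using length_cr_cycle[of n] by auto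
  moreover from this have "hd (cr_cycle n) = last (cr_cycle n)"
    by (simp add: hd_conv_nth last_conv_nth length_cr_cycle cr_cycle_nth)
  ultimately show ?thesis
    unfolding closed_walk_def cr_covers_iff using step by (auto simp: length_cr_cycle)
qed

lemma cr_cycle_net_flow:
  assumes n: "n \<ge> 2"
  shows "net_flow (cr_cycle n) (X 1, Y 1) = 1"
proof -
  have Y1: "cr_cycle n ! p = Y 1 \<longleftrightarrow> p = 1" if "p \<le> 2 * n" for p
    using that n by (auto simp: cr_cycle_nth elim: oddE)
  have "cr_cycle n ! 0 = X 1" "cr_cycle n ! Suc (Suc 0) \<noteq> X 1"
    using n by (simp_all add: cr_cycle_nth)
  then have forward: "{i. Suc i < length (cr_cycle n) \<and> (cr_cycle n ! i, cr_cycle n ! Suc i) = (X 1, Y 1)} = {0}"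
    and backward: "{i. Suc i < length (cr_cycle n) \<and> (cr_cycle n ! i, cr_cycle n ! Suc i) = (Y 1, X 1)} = {}"
    using n Y1 by (auto simp: length_cr_cycle)
  show ?thesis
    unfolding net_flow_def step_count_def swap_simp forward backward by simp
qed

lemma cr_net_flow_cancel_iff:
  assumes n: "n \<ge> 2"
    and edges: "p \<in> basis (cr_set n) (cr_less n)" "q \<in> basis (cr_set n) (cr_less n)"
  shows "(\<forall>us. closed_walk (cr_set n) (cr_less n) us \<longrightarrow> net_flow us p + net_flow us q = 0)
    \<longleftrightarrow> odd_edge p \<noteq> odd_edge q"
proof
  assume "\<forall>us. closed_walk (cr_set n) (cr_less n) us \<longrightarrow> net_flow us p + net_flow us q = 0"
  then have "net_flow (cr_cycle n) p + net_flow (cr_cycle n) q = 0"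
    using cr_cycle_closed_walk[OF n] by blast
  then show "odd_edge p \<noteq> odd_edge q"
    using cr_net_flow_winding[OF n cr_cycle_closed_walk[OF n]] edges cr_cycle_net_flow[OF n]
    by (auto split: if_splits)
qed (use cr_net_flow_winding[OF n] edges in auto)

lemma cr_admissible_iff:
  assumes n: "n \<ge> 2" and \<theta>: "\<theta> \<in> M_set (cr_set n) (cr_less n)"
  shows "admissible (cr_set n) (cr_less n) \<theta> \<longleftrightarrow>
    (\<forall>k\<in>{1..n}. odd_edge (\<theta> (X k, Y k)) \<noteq> odd_edge (\<theta> (X k, Y (cr_pred n k))) \<and>
                odd_edge (\<theta> (X k, Y k)) \<noteq> odd_edge (\<theta> (X (cr_succ n k), Y k)))"
    (is "_ \<longleftrightarrow> ?parity")
proof -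
  have bij: "bij_betw \<theta> (basis (cr_set n) (cr_less n)) (basis (cr_set n) (cr_less n))"
    using \<theta> unfolding M_set_def by simp
  have edge: "\<theta> (X k, Y k) \<in> basis (cr_set n) (cr_less n)"
    "\<theta> (X k, Y (cr_pred n k)) \<in> basis (cr_set n) (cr_less n)"
    "\<theta> (X (cr_succ n k), Y k) \<in> basis (cr_set n) (cr_less n)"
    if "k \<in> {1..n}" for k
    using bij_betwE[OF bij] cr_less_X_iff[OF n that] cr_less_Y_iff[OF n that]
    by (simp_all add: cr_basis_iff)
  have "admissible (cr_set n) (cr_less n) \<theta> \<longleftrightarrow> (\<forall>us. closed_walk (cr_set n) (cr_less n) us \<longrightarrow>
      (\<forall>k\<in>{1..n}. net_flow us (\<theta> (X k, Y k)) + net_flow us (\<theta> (X k, Y (cr_pred n k))) = 0 \<and>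
                  net_flow us (\<theta> (X k, Y k)) + net_flow us (\<theta> (X (cr_succ n k), Y k)) = 0))"
    unfolding admissible_iff_net_flow_balance[OF finite_cr_set bij] cr_vertex_balance_iff[OF n] ..
  also have "\<dots> \<longleftrightarrow> (\<forall>k\<in>{1..n}.
      (\<forall>us. closed_walk (cr_set n) (cr_less n) us \<longrightarrow>
         net_flow us (\<theta> (X k, Y k)) + net_flow us (\<theta> (X k, Y (cr_pred n k))) = 0) \<and>
      (\<forall>us. closed_walk (cr_set n) (cr_less n) us \<longrightarrow>
         net_flow us (\<theta> (X k, Y k)) + net_flow us (\<theta> (X (cr_succ n k), Y k)) = 0))"
    by blast
  also have "\<dots> \<longleftrightarrow> ?parity"
    using edge by (simp add: cr_net_flow_cancel_iff[OF n])
  finally show ?thesis .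
qed

lemma cr_sorted_length_le: "sorted_wrt (cr_less n) ws \<Longrightarrow> length ws \<le> 2"
proof (induction ws rule: induct_list012)
  case (3 a b ws)
  then have "cr_less n a b" "ws \<noteq> [] \<Longrightarrow> cr_less n b (hd ws)"
    by (auto simp: neq_Nil_conv)
  then show ?case
    by (cases ws) (auto elim!: cr_less_cases)
qed auto

lemma cr_max_chain_is_edge:
  assumes max: "max_chain (cr_set n) (cr_less n) C"
  shows "\<exists>p\<in>basis (cr_set n) (cr_less n). C = [fst p, snd p]"
proof -
  have chain: "C \<noteq> []" "set C \<subseteq> cr_set n" "sorted_wrt (cr_less n) C"
    and maximal: "\<And>ws. is_chain_list (cr_set n) (cr_less n) ws \<Longrightarrow> set C \<subseteq> set ws \<Longrightarrow> set ws = set C"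
    using max unfolding max_chain_def is_chain_list_def by auto
  obtain a r where "C = a # r"
    using chain(1) by (meson neq_Nil_conv)
  then consider "C = [a]" | b where "C = [a, b]"
    using cr_sorted_length_le[OF chain(3)] by (cases r) auto
  then show ?thesis
  proof cases
    case 1
    then obtain k where k: "k \<in> {1..n}" "a = X k \<or> a = Y k"
      using chain(2) unfolding cr_set_def by auto
    then have "is_chain_list (cr_set n) (cr_less n) [X k, Y k]"
      unfolding is_chain_list_def cr_set_def by (auto simp: cr_less_XY_iff)
    moreover have "set C \<subseteq> set [X k, Y k]"
      using 1 k(2) by auto
    ultimately have "{X k, Y k} = {a}"
      using maximal 1 by simp
    then show ?thesis
      using cr.distinct(1)[of k k] by blast
  next
    case (2 b)
    then have "cr_less n a b"
      using chain(3) by simp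
    with 2 show ?thesis
      by (intro bexI[of _ "(a, b)"]) (simp_all add: cr_basis_iff)
  qed
qed

lemma cr_edge_max_chain:
  assumes p: "p \<in> basis (cr_set n) (cr_less n)"
  shows "max_chain (cr_set n) (cr_less n) [fst p, snd p]"
proof -
  obtain i j where ij: "p = (X i, Y j)" "cr_less n (X i) (Y j)"
    using p by (rule cr_basis_cases)
  have maximal: "set ws = set [X i, Y j]"
    if ws: "is_chain_list (cr_set n) (cr_less n) ws \<and> set [X i, Y j] \<subseteq> set ws" for ws
  proof -
    have "length ws \<le> 2"
      using ws cr_sorted_length_le unfolding is_chain_list_def by blast
    then have "card (set ws) \<le> card (set [X i, Y j])"
      using card_length[of ws] by simp
    then show ?thesis
      using card_seteq[OF finite_set] ws by (metis sym)
  qed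
  have "is_chain_list (cr_set n) (cr_less n) [X i, Y j]"
    unfolding is_chain_list_def using ij(2) cr_less_in_cr_set[OF ij(2)] by simp
  moreover have "[X i, Y j] \<noteq> []"
    by simp
  ultimately show ?thesis
    unfolding ij(1) fst_conv snd_conv max_chain_def using maximal by blast
qed

lemma cr_max_chain_iff:
  "max_chain (cr_set n) (cr_less n) C \<longleftrightarrow> (\<exists>p\<in>basis (cr_set n) (cr_less n). C = [fst p, snd p])"
  using cr_max_chain_is_edge cr_edge_max_chain by blast

lemma cr_chain_image_iff:
  assumes "\<theta> \<in> M_set (cr_set n) (cr_less n)" and "p \<in> basis (cr_set n) (cr_less n)"
  shows "chain_image (cr_set n) (cr_less n) \<theta> [fst p, snd p] C' \<longleftrightarrow> C' = [fst (\<theta> p), snd (\<theta> p)]"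
  using chain_image_pair_iff[OF assms(1) cr_edge_max_chain[OF assms(2)]] by simp

lemma cr_edge_chains_meet_iff:
  assumes "p \<in> basis (cr_set n) (cr_less n)" and "q \<in> basis (cr_set n) (cr_less n)"
  shows "set [fst p, snd p] \<noteq> set [fst q, snd q] \<and> set [fst p, snd p] \<inter> set [fst q, snd q] \<noteq> {}
    \<longleftrightarrow> p \<noteq> q \<and> (fst p = fst q \<or> snd p = snd q)"
proof -
  obtain i j k l where "p = (X i, Y j)" "q = (X k, Y l)"
    using cr_basis_cases[OF assms(1)] cr_basis_cases[OF assms(2)] by metis
  then show ?thesis
    by (auto simp: doubleton_eq_iff)
qed

lemma cr_odd_even_iff:
  assumes "n \<ge> 2" and "p \<in> basis (cr_set n) (cr_less n)"
  shows "cr_odd n [fst p, snd p] \<longleftrightarrow> odd_edge p" and "cr_even n [fst p, snd p] \<longleftrightarrow> \<not> odd_edge p"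
proof -
  obtain i j where p: "p = (X i, Y j)" and "cr_less n (X i) (Y j)"
    using assms(2) by (rule cr_basis_cases)
  then have "i \<in> {1..n}" "j \<in> {1..n}" "i = j \<or> i = j + 1 \<or> (i = 1 \<and> j = n)"
    unfolding cr_less_XY_iff by simp_all
  then show "cr_odd n [fst p, snd p] \<longleftrightarrow> odd_edge p" "cr_even n [fst p, snd p] \<longleftrightarrow> \<not> odd_edge p"
    using p assms(1) unfolding cr_odd_def cr_even_def by auto
qed

lemma cr_image_chains_opposite_parity_iff:
  assumes n: "n \<ge> 2" and \<theta>: "\<theta> \<in> M_set (cr_set n) (cr_less n)"
    and p: "p \<in> basis (cr_set n) (cr_less n)" and q: "q \<in> basis (cr_set n) (cr_less n)"
  shows "(cr_odd n [fst (\<theta> p), snd (\<theta> p)] \<and> cr_even n [fst (\<theta> q), snd (\<theta> q)]) \<or>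
      (cr_even n [fst (\<theta> p), snd (\<theta> p)] \<and> cr_odd n [fst (\<theta> q), snd (\<theta> q)])
      \<longleftrightarrow> odd_edge (\<theta> p) \<noteq> odd_edge (\<theta> q)"
proof -
  have "\<theta> p \<in> basis (cr_set n) (cr_less n)" "\<theta> q \<in> basis (cr_set n) (cr_less n)"
    using p q \<theta> bij_betwE unfolding M_set_def by blast+
  then show ?thesis
    using cr_odd_even_iff[OF n] by blast
qed

lemma cr_chain_parity_condition_iff:
  assumes n: "n \<ge> 2" and \<theta>: "\<theta> \<in> M_set (cr_set n) (cr_less n)"
  shows "(\<forall>C D C' D'. max_chain (cr_set n) (cr_less n) C \<and> max_chain (cr_set n) (cr_less n) D \<and>
        set C \<noteq> set D \<and> set C \<inter> set D \<noteq> {} \<and>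
        chain_image (cr_set n) (cr_less n) \<theta> C C' \<and> chain_image (cr_set n) (cr_less n) \<theta> D D' \<longrightarrow>
        (cr_odd n C' \<and> cr_even n D') \<or> (cr_even n C' \<and> cr_odd n D')) \<longleftrightarrow>
    (\<forall>p\<in>basis (cr_set n) (cr_less n). \<forall>q\<in>basis (cr_set n) (cr_less n).
        p \<noteq> q \<and> (fst p = fst q \<or> snd p = snd q) \<longrightarrow> odd_edge (\<theta> p) \<noteq> odd_edge (\<theta> q))"
    (is "?chains \<longleftrightarrow> ?edges")
proof -
  let ?E = "basis (cr_set n) (cr_less n)"
  note parity = cr_image_chains_opposite_parity_iff[OF n \<theta>]
  show ?thesis
  proof
    assume chains: ?chains
    show ?edges
    proof (intro ballI impI)
      fix p q assume p: "p \<in> ?E" and q: "q \<in> ?E" and pq: "p \<noteq> q \<and> (fst p = fst q \<or> snd p = snd q)"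
      have "max_chain (cr_set n) (cr_less n) [fst p, snd p]" "max_chain (cr_set n) (cr_less n) [fst q, snd q]"
        using p q cr_edge_max_chain by blast+
      moreover have "set [fst p, snd p] \<noteq> set [fst q, snd q]" "set [fst p, snd p] \<inter> set [fst q, snd q] \<noteq> {}"
        using cr_edge_chains_meet_iff[OF p q] pq by simp_all
      moreover have "chain_image (cr_set n) (cr_less n) \<theta> [fst p, snd p] [fst (\<theta> p), snd (\<theta> p)]"
        "chain_image (cr_set n) (cr_less n) \<theta> [fst q, snd q] [fst (\<theta> q), snd (\<theta> q)]"
        using cr_chain_image_iff[OF \<theta>] p q by simp_all
      ultimately show "odd_edge (\<theta> p) \<noteq> odd_edge (\<theta> q)"
        using chains[rule_format, of "[fst p, snd p]" "[fst q, snd q]"] parity[OF p q] by blast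
    qed
  next
    assume edges: ?edges
    show ?chains
    proof (intro allI impI, elim conjE)
      fix C D C' D'
      assume "max_chain (cr_set n) (cr_less n) C" "max_chain (cr_set n) (cr_less n) D"
        and CD: "set C \<noteq> set D" "set C \<inter> set D \<noteq> {}"
        and images: "chain_image (cr_set n) (cr_less n) \<theta> C C'" "chain_image (cr_set n) (cr_less n) \<theta> D D'"
      then obtain p q where p: "p \<in> ?E" "C = [fst p, snd p]" and q: "q \<in> ?E" "D = [fst q, snd q]"
        using cr_max_chain_iff by meson
      have "C' = [fst (\<theta> p), snd (\<theta> p)]" "D' = [fst (\<theta> q), snd (\<theta> q)]"
        using images cr_chain_image_iff[OF \<theta>] p q by simp_all
      moreover have "odd_edge (\<theta> p) \<noteq> odd_edge (\<theta> q)"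
        using edges p(1) q(1) cr_edge_chains_meet_iff[OF p(1) q(1)] CD p(2) q(2) by simp
      ultimately show "(cr_odd n C' \<and> cr_even n D') \<or> (cr_even n C' \<and> cr_odd n D')"
        using parity[OF p(1) q(1)] by simp
    qed
  qed
qed

lemma cr_adjacent_edges_cases:
  assumes n: "n \<ge> 2"
    and p: "p \<in> basis (cr_set n) (cr_less n)" and q: "q \<in> basis (cr_set n) (cr_less n)"
    and "p \<noteq> q" and "fst p = fst q \<or> snd p = snd q"
  obtains k where "k \<in> {1..n}" "{p, q} = {(X k, Y k), (X k, Y (cr_pred n k))}"
    | k where "k \<in> {1..n}" "{p, q} = {(X k, Y k), (X (cr_succ n k), Y k)}"
proof -
  obtain i j where ij: "p = (X i, Y j)" "cr_less n (X i) (Y j)"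
    using p by (rule cr_basis_cases)
  then have ij_range: "i \<in> {1..n}" "j \<in> {1..n}"
    by (simp_all add: cr_less_XY_iff)
  show thesis
  proof (cases "fst p = fst q")
    case True
    then have "p \<in> {r \<in> basis (cr_set n) (cr_less n). fst r = X i}"
      "q \<in> {r \<in> basis (cr_set n) (cr_less n). fst r = X i}"
      using p q ij(1) by simp_all
    then have "p \<in> {(X i, Y i), (X i, Y (cr_pred n i))}" "q \<in> {(X i, Y i), (X i, Y (cr_pred n i))}"
      unfolding cr_edges_at_X(1)[OF n ij_range(1)] .
    then show thesis
      using that(1)[OF ij_range(1)] \<open>p \<noteq> q\<close> by blast
  next
    case False
    then have "p \<in> {r \<in> basis (cr_set n) (cr_less n). snd r = Y j}"
      "q \<in> {r \<in> basis (cr_set n) (cr_less n). snd r = Y j}"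
      using p q ij(1) assms(5) by simp_all
    then have "p \<in> {(X j, Y j), (X (cr_succ n j), Y j)}" "q \<in> {(X j, Y j), (X (cr_succ n j), Y j)}"
      unfolding cr_edges_at_Y(1)[OF n ij_range(2)] .
    then show thesis
      using that(2)[OF ij_range(2)] \<open>p \<noteq> q\<close> by blast
  qed
qed

lemma cr_adjacent_edges_iff:
  assumes n: "n \<ge> 2"
  shows "(\<forall>p\<in>basis (cr_set n) (cr_less n). \<forall>q\<in>basis (cr_set n) (cr_less n).
        p \<noteq> q \<and> (fst p = fst q \<or> snd p = snd q) \<longrightarrow> f p \<noteq> f q) \<longleftrightarrow>
    (\<forall>k\<in>{1..n}. f (X k, Y k) \<noteq> f (X k, Y (cr_pred n k)) \<and> f (X k, Y k) \<noteq> f (X (cr_succ n k), Y k))"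
    (is "?adjacent \<longleftrightarrow> ?stars")
proof
  assume adjacent: ?adjacent
  show ?stars
  proof
    fix k assume k: "k \<in> {1..n}"
    have "(X k, Y k) \<in> basis (cr_set n) (cr_less n)"
      "(X k, Y (cr_pred n k)) \<in> basis (cr_set n) (cr_less n)"
      "(X (cr_succ n k), Y k) \<in> basis (cr_set n) (cr_less n)"
      using cr_less_X_iff[OF n k] cr_less_Y_iff[OF n k] by (simp_all add: cr_basis_iff)
    then show "f (X k, Y k) \<noteq> f (X k, Y (cr_pred n k)) \<and> f (X k, Y k) \<noteq> f (X (cr_succ n k), Y k)"
      using adjacent[rule_format, of "(X k, Y k)" "(X k, Y (cr_pred n k))"]
        adjacent[rule_format, of "(X k, Y k)" "(X (cr_succ n k), Y k)"]
        cr_pred_neq[OF n k] cr_succ_neq[OF n k] by simp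
  qed
next
  assume stars: ?stars
  show ?adjacent
  proof (intro ballI impI, elim conjE)
    fix p q
    assume "p \<in> basis (cr_set n) (cr_less n)" "q \<in> basis (cr_set n) (cr_less n)"
      and "p \<noteq> q" "fst p = fst q \<or> snd p = snd q"
    then show "f p \<noteq> f q"
    proof (rule cr_adjacent_edges_cases[OF n])
      fix k assume "k \<in> {1..n}" and "{p, q} = {(X k, Y k), (X k, Y (cr_pred n k))}"
      then show "f p \<noteq> f q"
        using stars by (auto simp: doubleton_eq_iff dest: bspec[of _ _ k])
    next
      fix k assume "k \<in> {1..n}" and "{p, q} = {(X k, Y k), (X (cr_succ n k), Y k)}"
      then show "f p \<noteq> f q"
        using stars by (auto simp: doubleton_eq_iff dest: bspec[of _ _ k])
    qed
  qed
qed

theorem lemma4p9: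
  fixes n :: nat and \<theta> :: "cr \<times> cr \<Rightarrow> cr \<times> cr"
  assumes "n \<ge> 2"
    and "\<theta> \<in> M_set (cr_set n) (cr_less n)"
  shows "\<theta> \<in> AM_set (cr_set n) (cr_less n) \<longleftrightarrow>
    (\<forall>C D C' D'. max_chain (cr_set n) (cr_less n) C \<and> max_chain (cr_set n) (cr_less n) D \<and>
        set C \<noteq> set D \<and> set C \<inter> set D \<noteq> {} \<and>
        chain_image (cr_set n) (cr_less n) \<theta> C C' \<and> chain_image (cr_set n) (cr_less n) \<theta> D D' \<longrightarrow>
        (cr_odd n C' \<and> cr_even n D') \<or> (cr_even n C' \<and> cr_odd n D'))"
  (is "_ \<longleftrightarrow> ?rhs")
proof -
  have "\<theta> \<in> AM_set (cr_set n) (cr_less n) \<longleftrightarrow> admissible (cr_set n) (cr_less n) \<theta>"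
    using assms(2) unfolding AM_set_def by simp
  also have "\<dots> \<longleftrightarrow> (\<forall>k\<in>{1..n}. odd_edge (\<theta> (X k, Y k)) \<noteq> odd_edge (\<theta> (X k, Y (cr_pred n k))) \<and>
                                odd_edge (\<theta> (X k, Y k)) \<noteq> odd_edge (\<theta> (X (cr_succ n k), Y k)))"
    by (rule cr_admissible_iff[OF assms])
  also have "\<dots> \<longleftrightarrow> (\<forall>p\<in>basis (cr_set n) (cr_less n). \<forall>q\<in>basis (cr_set n) (cr_less n).
      p \<noteq> q \<and> (fst p = fst q \<or> snd p = snd q) \<longrightarrow> odd_edge (\<theta> p) \<noteq> odd_edge (\<theta> q))"
    by (rule cr_adjacent_edges_iff[OF assms(1), symmetric])
  also have "\<dots> \<longleftrightarrow> ?rhs"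
    by (rule cr_chain_parity_condition_iff[OF assms, symmetric])
  finally show ?thesis .
qed

end
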